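(* Let $A=(a_{ij})$ be column-stochastic and compatible with the strongly connected digraph $\mathcal G$ with parameter $\bar m$, let $(i^k,\mathbf d^k)$ satisfy the asynchrony model with constants $T,D$, and let $\widehat{\mathbf A}^k=\mathbf S^k\mathbf C^k\in\mathbb R^{S\times S}$ be the augmented matrices defined in the context. Then for all $k\in\mathbb N_0$: (a) $\widehat{\mathbf A}^k$ is column-stochastic; (b) every entry in the rows indexed by $\mathcal V$ (the computing agents) of $\widehat{\mathbf A}^{k+K_1-1:k}$ is at least $\eta=\bar m^{K_1}$, where $K_1=(2I-1)T+ID$.
   Context: $\mathcal G=(\mathcal V,\mathcal E)$, $\mathcal V=\{1,\dots,I\}$, strongly connected digraph without self-loops; $(j,i)\in\mathcal E$ means $j$ sends to $i$; $\mathcal N_i^{\rm in}=\{j:(j,i)\in\mathcal E\}$, $\mathcal N_i^{\rm out}=\{j:(i,j)\in\mathcal E\}$. Compatibility with parameter $\bar m\in(0,1)$: $a_{ii}\ge\bar m$, $a_{ij}\ge\bar m$ for $(j,i)\in\mathcal E$, $a_{ij}=0$ otherwise. Asynchrony model: $(i^k,\mathbf d^k)$, $i^k\in\mathcal V$, $\mathbf d^k=(d_j^k)_{j\in\mathcal N^{\rm in}_{i^k}}$, every agent appears among $i^k,\dots,i^{k+T-1}$ for all $k$, $0\le d_j^k\le D$. Counters: $\tau_{ij}^{-1}=-D$ for $(j,i)\in\mathcal E$; $\tau_{i^kj}^k=\max(\tau_{i^kj}^{k-1},k-d_j^k)$ for $j\in\mathcal N^{\rm in}_{i^k}$, and $\tau_{ij}^k=\tau_{ij}^{k-1}$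 for $i\ne i^k$. Augmented index set $\widehat{\mathcal V}=\mathcal V\cup\{(j,i)^d:(j,i)\in\mathcal E,\ d=0,\dots,D\}$ (virtual nodes), $S=|\widehat{\mathcal V}|=I+(D+1)|\mathcal E|$. Let $R^k=\{(j,i^k)^d: j\in\mathcal N^{\rm in}_{i^k},\ k-\tau^k_{i^kj}\le d\le D\}$. Sum matrix $\mathbf C^k$: $C^k_{hm}=1$ if $h=i^k$ and $m\in R^k$; $C^k_{hm}=1$ if $h=m\in\widehat{\mathcal V}\setminus R^k$; $0$ otherwise. Push matrix $\mathbf S^k$: $S^k_{(i^k,j)^0,\,i^k}=a_{ji^k}$ for $j\in\mathcal N^{\rm out}_{i^k}$; $S^k_{i^ki^k}=a_{i^ki^k}$; $S^k_{hh}=1$ for $h\in\mathcal V\setminus\{i^k\}$; $S^k_{(i,j)^{d+1},(i,j)^d}=1$ for $(i,j)\in\mathcal E$, $0\le d\le D-1$; $S^k_{(i,j)^D,(i,j)^D}=1$ for $(i,j)\in\mathcal E$; all other entries $0$. $\widehat{\mathbf A}^{k:t}=\widehat{\mathbf A}^k\cdots\widehat{\mathbf A}^t$ ($=\widehat{\mathbf A}^t$ if $k=t$). *)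

theory Defs
  imports Complex_Main
begin

text \<open>Agents are 0..<I. Augmented nodes: Ag i is agent i; Vt j i d is the virtual node (j,i)^d.\<close>

datatype node = Ag nat | Vt nat nat nat

definition agents :: "nat \<Rightarrow> nat set" where
  "agents I = {0..<I}"

definition N_in :: "(nat \<times> nat) set \<Rightarrow> nat \<Rightarrow> nat set" where
  "N_in E i = {j. (j, i) \<in> E}"

definition N_out :: "(nat \<times> nat) set \<Rightarrow> nat \<Rightarrow> nat set" where
  "N_out E i = {j. (i, j) \<in> E}"

definition strongly_connected_digraph :: "nat \<Rightarrow> (nat \<times> nat) set \<Rightarrow> bool" where
  "strongly_connected_digraph I E \<longleftrightarrow>
     E \<subseteq> agents I \<times> agents I \<and> (\<forall>(i,j)\<in>E. i \<noteq> j) \<and>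
     (\<forall>i\<in>agents I. \<forall>j\<in>agents I. (i, j) \<in> E\<^sup>*)"

definition col_stochastic :: "'a set \<Rightarrow> ('a \<Rightarrow> 'a \<Rightarrow> real) \<Rightarrow> bool" where
  "col_stochastic X M \<longleftrightarrow>
     (\<forall>h\<in>X. \<forall>m\<in>X. M h m \<ge> 0) \<and> (\<forall>m\<in>X. (\<Sum>h\<in>X. M h m) = 1)"

definition compatible :: "nat \<Rightarrow> (nat \<times> nat) set \<Rightarrow> real \<Rightarrow> (nat \<Rightarrow> nat \<Rightarrow> real) \<Rightarrow> bool" where
  "compatible I E mbar a \<longleftrightarrow>
     (\<forall>i\<in>agents I. a i i \<ge> mbar) \<and>
     (\<forall>i\<in>agents I. \<forall>j\<in>agents I. (j, i) \<in> E \<longrightarrow> a i j \<ge> mbar) \<and>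
     (\<forall>i\<in>agents I. \<forall>j\<in>agents I. i \<noteq> j \<and> (j, i) \<notin> E \<longrightarrow> a i j = 0)"

text \<open>Asynchrony model: ik k is the active agent at iteration k, dl k j the delay d_j^k.\<close>
definition async_model :: "nat \<Rightarrow> (nat \<times> nat) set \<Rightarrow> (nat \<Rightarrow> nat) \<Rightarrow> (nat \<Rightarrow> nat \<Rightarrow> nat)
     \<Rightarrow> nat \<Rightarrow> nat \<Rightarrow> bool" where
  "async_model I E ik dl T D \<longleftrightarrow>
     (\<forall>k. ik k \<in> agents I) \<and>
     (\<forall>k. \<forall>i\<in>agents I. \<exists>t\<in>{k..<k+T}. ik t = i) \<and>
     (\<forall>k. \<forall>j\<in>N_in E (ik k). dl k j \<le> D)"

text \<open>Counters: tauS 0 i j = tau^{-1}_{ij}, tauS (Suc k) i j = tau^k_{ij}.\<close>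
fun tauS :: "(nat \<times> nat) set \<Rightarrow> (nat \<Rightarrow> nat) \<Rightarrow> (nat \<Rightarrow> nat \<Rightarrow> nat) \<Rightarrow> nat
     \<Rightarrow> nat \<Rightarrow> nat \<Rightarrow> nat \<Rightarrow> int" where
  "tauS E ik dl D 0 i j = - int D"
| "tauS E ik dl D (Suc k) i j =
     (if i = ik k \<and> j \<in> N_in E (ik k)
      then max (tauS E ik dl D k i j) (int k - int (dl k j))
      else tauS E ik dl D k i j)"

definition tau :: "(nat \<times> nat) set \<Rightarrow> (nat \<Rightarrow> nat) \<Rightarrow> (nat \<Rightarrow> nat \<Rightarrow> nat) \<Rightarrow> nat
     \<Rightarrow> nat \<Rightarrow> nat \<Rightarrow> nat \<Rightarrow> int" where
  "tau E ik dl D k i j = tauS E ik dl D (Suc k) i j"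

definition aug_nodes :: "nat \<Rightarrow> (nat \<times> nat) set \<Rightarrow> nat \<Rightarrow> node set" where
  "aug_nodes I E D = Ag ` agents I \<union> {Vt j i d | j i d. (j, i) \<in> E \<and> d \<le> D}"

definition Rset :: "(nat \<times> nat) set \<Rightarrow> (nat \<Rightarrow> nat) \<Rightarrow> (nat \<Rightarrow> nat \<Rightarrow> nat) \<Rightarrow> nat \<Rightarrow> nat
     \<Rightarrow> node set" where
  "Rset E ik dl D k = {Vt j (ik k) d | j d. j \<in> N_in E (ik k) \<and>
       int k - tau E ik dl D k (ik k) j \<le> int d \<and> d \<le> D}"

definition Cmat :: "nat \<Rightarrow> (nat \<times> nat) set \<Rightarrow> (nat \<Rightarrow> nat) \<Rightarrow> (nat \<Rightarrow> nat \<Rightarrow> nat) \<Rightarrow> nat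
     \<Rightarrow> nat \<Rightarrow> node \<Rightarrow> node \<Rightarrow> real" where
  "Cmat I E ik dl D k h m =
     (if h = Ag (ik k) \<and> m \<in> Rset E ik dl D k then 1
      else if h = m \<and> m \<in> aug_nodes I E D - Rset E ik dl D k then 1
      else 0)"

definition Smat :: "nat \<Rightarrow> (nat \<times> nat) set \<Rightarrow> (nat \<Rightarrow> nat \<Rightarrow> real) \<Rightarrow> (nat \<Rightarrow> nat) \<Rightarrow> nat
     \<Rightarrow> nat \<Rightarrow> node \<Rightarrow> node \<Rightarrow> real" where
  "Smat I E a ik D k h m =
     (case (h, m) of
        (Vt i j d, Ag l) \<Rightarrow>
           (if l = ik k \<and> i = ik k \<and> j \<in> N_out E (ik k) \<and> d = 0 then a j (ik k) else 0)
      | (Ag l, Ag l') \<Rightarrow>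
           (if l = l' \<and> l = ik k then a l l
            else if l = l' \<and> l \<in> agents I then 1 else 0)
      | (Vt i j d, Vt i' j' d') \<Rightarrow>
           (if i = i' \<and> j = j' \<and> (i, j) \<in> E \<and>
               ((d = Suc d' \<and> d' < D) \<or> (d = D \<and> d' = D)) then 1 else 0)
      | (Ag l, Vt i j d) \<Rightarrow> 0)"

definition mmult :: "'a set \<Rightarrow> ('a \<Rightarrow> 'a \<Rightarrow> real) \<Rightarrow> ('a \<Rightarrow> 'a \<Rightarrow> real) \<Rightarrow> 'a \<Rightarrow> 'a \<Rightarrow> real" where
  "mmult X M N h m = (\<Sum>l\<in>X. M h l * N l m)"

definition Ahat :: "nat \<Rightarrow> (nat \<times> nat) set \<Rightarrow> (nat \<Rightarrow> nat \<Rightarrow> real) \<Rightarrow> (nat \<Rightarrow> nat)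
     \<Rightarrow> (nat \<Rightarrow> nat \<Rightarrow> nat) \<Rightarrow> nat \<Rightarrow> nat \<Rightarrow> node \<Rightarrow> node \<Rightarrow> real" where
  "Ahat I E a ik dl D k = mmult (aug_nodes I E D) (Smat I E a ik D k) (Cmat I E ik dl D k)"

text \<open>Aprod ... t n = Ahat^{t+n:t} = Ahat^{t+n} * ... * Ahat^t.\<close>
fun Aprod :: "nat \<Rightarrow> (nat \<times> nat) set \<Rightarrow> (nat \<Rightarrow> nat \<Rightarrow> real) \<Rightarrow> (nat \<Rightarrow> nat)
     \<Rightarrow> (nat \<Rightarrow> nat \<Rightarrow> nat) \<Rightarrow> nat \<Rightarrow> nat \<Rightarrow> nat \<Rightarrow> node \<Rightarrow> node \<Rightarrow> real" where
  "Aprod I E a ik dl D t 0 = Ahat I E a ik dl D t"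
| "Aprod I E a ik dl D t (Suc n) =
     mmult (aug_nodes I E D) (Ahat I E a ik dl D (t + Suc n)) (Aprod I E a ik dl D t n)"

end

theory Submission
  imports Defs "HOL-Library.Transitive_Closure_Table"
begin

text \<open>
  Column stochasticity holds factor by factor: every column of \<open>C\<^sup>k\<close> is a unit vector, and
  \<open>S\<^sup>k\<close> either spreads the active agent's column over its out-edges with the weights of
  column \<open>i\<^sup>k\<close> of \<open>A\<close>, or moves an entry one place down its delay line.

  For the lower bound, read the entries \<open>\<ge> mbar\<close> of the matrices \<open>A\<^sup>u\<close> as the edges of a
  time-varying graph: an entry of \<open>A\<^sup>k\<^sup>+\<^sup>n\<^sup>:\<^sup>k\<close> is at least \<open>mbar\<^sup>n\<^sup>+\<^sup>1\<close> as soon as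
  a walk of length \<open>n + 1\<close> in this graph leads from its column to its row. Agents have self-loops,
  so they can wait. A virtual node \<open>(j,i)\<^sup>d\<close> ages along its delay line and is absorbed by
  \<open>i\<close> at the latest when \<open>i\<close> is active after the delay has reached \<open>D\<close>, i.e. within
  \<open>D + T\<close> steps. An edge \<open>(l,j)\<close> of the graph is crossed within \<open>2T + D\<close> steps: wait until
  \<open>l\<close> is active, push to \<open>(l,j)\<^sup>0\<close>, travel to \<open>j\<close>. A shortest path has at most \<open>I - 1\<close>
  edges, so every augmented node reaches every agent in \<open>D + T + (I - 1)(2T + D) = K\<^sub>1\<close> steps.
\<close>

lemma col_stochastic_nonneg: "col_stochastic X M \<Longrightarrow> h \<in> X \<Longrightarrow> m \<in> X \<Longrightarrow> 0 \<le> M h m"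
  unfolding col_stochastic_def by blast

lemma col_stochastic_mmult:
  assumes "col_stochastic X M" "col_stochastic X N"
  shows "col_stochastic X (mmult X M N)"
  unfolding col_stochastic_def
proof (intro conjI ballI)
  fix h m assume "h \<in> X" "m \<in> X"
  then show "0 \<le> mmult X M N h m"
    using assms unfolding mmult_def col_stochastic_def by (auto intro!: sum_nonneg)
next
  fix m assume m: "m \<in> X"
  have "(\<Sum>h\<in>X. mmult X M N h m) = (\<Sum>l\<in>X. (\<Sum>h\<in>X. M h l) * N l m)"
    unfolding mmult_def by (subst sum.swap) (simp add: sum_distrib_right)
  also have "\<dots> = (\<Sum>l\<in>X. N l m)"
    using assms(1) unfolding col_stochastic_def by simp
  also have "\<dots> = 1"
    using assms(2) m unfolding col_stochastic_def by simp
  finally show "(\<Sum>h\<in>X. mmult X M N h m) = 1" .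
qed

lemma mmult_ge_term:
  assumes "finite X" "col_stochastic X M" "col_stochastic X N" "h \<in> X" "l \<in> X" "m \<in> X"
  shows "M h l * N l m \<le> mmult X M N h m"
  unfolding mmult_def
  using assms by (intro member_le_sum) (auto intro: mult_nonneg_nonneg col_stochastic_nonneg)

fun left_product :: "'a set \<Rightarrow> (nat \<Rightarrow> 'a \<Rightarrow> 'a \<Rightarrow> real) \<Rightarrow> nat \<Rightarrow> nat \<Rightarrow> 'a \<Rightarrow> 'a \<Rightarrow> real" where
  "left_product X M t 0 = M t"
| "left_product X M t (Suc n) = mmult X (M (t + Suc n)) (left_product X M t n)"

lemma col_stochastic_left_product:
  "(\<And>u. col_stochastic X (M u)) \<Longrightarrow> col_stochastic X (left_product X M t n)"
  by (induction n) (simp_all add: col_stochastic_mmult)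

text \<open>The walk starts at \<open>y\<close> at time \<open>t\<close>; a step from \<open>l\<close> at time \<open>u\<close> to \<open>x\<close> uses the
  entry \<open>M u x l\<close>, so columns are sources.\<close>
inductive heavy_walk :: "'a set \<Rightarrow> (nat \<Rightarrow> 'a \<Rightarrow> 'a \<Rightarrow> real) \<Rightarrow> real \<Rightarrow> nat \<Rightarrow> 'a \<Rightarrow> nat \<Rightarrow> 'a \<Rightarrow> bool"
  for X M b t y where
  start: "y \<in> X \<Longrightarrow> heavy_walk X M b t y t y"
| step: "heavy_walk X M b t y u l \<Longrightarrow> x \<in> X \<Longrightarrow> b \<le> M u x l \<Longrightarrow> heavy_walk X M b t y (Suc u) x"

lemma heavy_walk_in: "heavy_walk X M b t y u x \<Longrightarrow> x \<in> X"
  by (induction rule: heavy_walk.induct) auto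

lemma heavy_walk_start: "heavy_walk X M b t y u x \<Longrightarrow> y \<in> X \<and> t \<le> u \<and> (u = t \<longrightarrow> x = y)"
  by (induction rule: heavy_walk.induct) auto

lemma heavy_walk_wait:
  assumes "heavy_walk X M b t y u x" "\<And>v. b \<le> M v x x" "u \<le> u'"
  shows "heavy_walk X M b t y u' x"
  using assms(3)
proof (induction u' rule: dec_induct)
  case (step v)
  show ?case by (rule heavy_walk.step[OF step.IH heavy_walk_in[OF assms(1)] assms(2)])
qed (fact assms(1))

lemma heavy_walk_le_left_product:
  assumes fin: "finite X" and stoch: "\<And>u. col_stochastic X (M u)" and b: "0 \<le> b"
  shows "heavy_walk X M b t y (Suc (t + n)) x \<Longrightarrow> b ^ Suc n \<le> left_product X M t n x y"
proof (induction n arbitrary: x)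
  case 0
  then obtain l where "heavy_walk X M b t y t l" "b \<le> M t x l"
    by (cases rule: heavy_walk.cases) auto
  then show ?case using heavy_walk_start by fastforce
next
  case (Suc n)
  from Suc.prems obtain l where l: "heavy_walk X M b t y (Suc (t + n)) l" "b \<le> M (t + Suc n) x l"
    by (cases rule: heavy_walk.cases) auto
  have "b ^ Suc (Suc n) = b * b ^ Suc n" by simp
  also have "\<dots> \<le> M (t + Suc n) x l * left_product X M t n l y"
    using l Suc.IH b by (intro mult_mono) auto
  also have "\<dots> \<le> left_product X M t (Suc n) x y"
    using heavy_walk_in[OF Suc.prems] heavy_walk_in[OF l(1)] heavy_walk_start[OF l(1)] fin stoch
    by (auto intro!: mmult_ge_term col_stochastic_left_product)
  finally show ?case .
qed

lemma rtrancl_imp_short_rtrancl_path: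
  assumes "(x, y) \<in> E\<^sup>*" "x \<in> V" "Range E \<subseteq> V" "finite V"
  obtains ps where "rtrancl_path (\<lambda>u v. (u, v) \<in> E) x ps y" "length ps < card V"
proof -
  have "\<exists>ps. rtrancl_path (\<lambda>u v. (u, v) \<in> E) x ps y"
    using assms(1) by (simp add: rtranclp_eq_rtrancl_path[symmetric] rtranclp_rtrancl_eq)
  then obtain ps where path: "rtrancl_path (\<lambda>u v. (u, v) \<in> E) x ps y" ..
  then obtain ps' where ps': "rtrancl_path (\<lambda>u v. (u, v) \<in> E) x ps' y" "distinct (x # ps')"
    "set ps' \<subseteq> set ps"
    by (rule rtrancl_path_distinct)
  have "set ps \<subseteq> V"
    using rtrancl_path_Range[OF path] assms(3) by blast
  with ps'(3) assms(2) have "set (x # ps') \<subseteq> V" by simp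
  then have "length (x # ps') \<le> card V"
    using card_mono[OF assms(4)] by (simp only: distinct_card[OF ps'(2), symmetric])
  then show ?thesis by (intro that[OF ps'(1)]) simp
qed

lemma Smat_Ag_Vt [simp]: "Smat I E a ik D k (Ag l) (Vt i j d) = 0"
  by (simp add: Smat_def)

lemma Smat_Vt_Vt [simp]:
  "Smat I E a ik D k (Vt i' j' d') (Vt i j d) =
     (if i' = i \<and> j' = j \<and> (i', j') \<in> E \<and> ((d' = Suc d \<and> d < D) \<or> (d' = D \<and> d = D)) then 1 else 0)"
  by (simp add: Smat_def)

lemma Smat_Ag_Ag [simp]:
  "Smat I E a ik D k (Ag l') (Ag l) =
     (if l' = l \<and> l = ik k then a l l else if l' = l \<and> l \<in> agents I then 1 else 0)"
  by (simp add: Smat_def) blast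

lemma Smat_Vt_Ag [simp]:
  "Smat I E a ik D k (Vt i j d) (Ag l) =
     (if l = ik k \<and> i = ik k \<and> j \<in> N_out E (ik k) \<and> d = 0 then a j (ik k) else 0)"
  by (simp add: Smat_def)

locale augmented_network =
  fixes I T D :: nat and E :: "(nat \<times> nat) set" and mbar :: real
    and a :: "nat \<Rightarrow> nat \<Rightarrow> real" and ik :: "nat \<Rightarrow> nat" and dl :: "nat \<Rightarrow> nat \<Rightarrow> nat"
  assumes graph: "strongly_connected_digraph I E"
    and mbar_pos: "0 < mbar" and mbar_less_1: "mbar < 1"
    and col_stochastic_a: "col_stochastic (agents I) a"
    and compatible_a: "compatible I E mbar a"
    and async: "async_model I E ik dl T D"
begin

abbreviation "X \<equiv> aug_nodes I E D"
abbreviation "S k \<equiv> Smat I E a ik D k"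
abbreviation "C k \<equiv> Cmat I E ik dl D k"
abbreviation "A k \<equiv> Ahat I E a ik dl D k"
abbreviation "R k \<equiv> Rset E ik dl D k"
abbreviation "walk t y \<equiv> heavy_walk X A mbar t y"

lemma edge_agents: "(j, i) \<in> E \<Longrightarrow> j \<in> agents I \<and> i \<in> agents I"
  using graph unfolding strongly_connected_digraph_def by blast

lemma N_out_subset: "N_out E i \<subseteq> agents I - {i}"
  using graph unfolding N_out_def strongly_connected_digraph_def by auto

lemma active_agent: "ik k \<in> agents I"
  using async unfolding async_model_def by blast

lemma active_within: "l \<in> agents I \<Longrightarrow> \<exists>s. u \<le> s \<and> s < u + T \<and> ik s = l"
  using async unfolding async_model_def by fastforce

lemma Ag_in_aug_nodes: "l \<in> agents I \<Longrightarrow> Ag l \<in> X"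
  unfolding aug_nodes_def by blast

lemma Vt_in_aug_nodes: "(j, i) \<in> E \<Longrightarrow> d \<le> D \<Longrightarrow> Vt j i d \<in> X"
  unfolding aug_nodes_def by blast

lemma aug_nodes_cases:
  assumes "m \<in> X"
  obtains l where "m = Ag l" "l \<in> agents I"
    | j i d where "m = Vt j i d" "(j, i) \<in> E" "d \<le> D"
  using assms unfolding aug_nodes_def by blast

lemma finite_agents: "finite (agents I)"
  by (simp add: agents_def)

lemma finite_aug_nodes: "finite X"
proof -
  have "finite E"
    using graph unfolding strongly_connected_digraph_def agents_def
    by (meson finite_SigmaI finite_atLeastLessThan finite_subset)
  moreover have "{Vt j i d | j i d. (j, i) \<in> E \<and> d \<le> D} \<subseteq> (\<lambda>((j, i), d). Vt j i d) ` (E \<times> {..D})"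
    by force
  ultimately have "finite {Vt j i d | j i d. (j, i) \<in> E \<and> d \<le> D}"
    by (meson finite_SigmaI finite_atMost finite_imageI finite_subset)
  then show ?thesis unfolding aug_nodes_def agents_def by simp
qed

lemma Rset_subset: "R u \<subseteq> X"
  unfolding Rset_def N_in_def using Vt_in_aug_nodes by blast

lemma Vt_in_Rset_receiver: "Vt j i d \<in> R u \<Longrightarrow> i = ik u"
  unfolding Rset_def by blast

lemma Ag_notin_Rset: "Ag l \<notin> R u"
  unfolding Rset_def by blast

text \<open>The counter update at the receiver's activation already makes a delay of \<open>D\<close> admissible.\<close>
lemma Vt_D_in_Rset: "(j, i) \<in> E \<Longrightarrow> ik u = i \<Longrightarrow> Vt j i D \<in> R u"
proof -
  assume e: "(j, i) \<in> E" "ik u = i"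
  then have j: "j \<in> N_in E (ik u)" unfolding N_in_def by simp
  then have "dl u j \<le> D" using async unfolding async_model_def by blast
  moreover have "tau E ik dl D u (ik u) j \<ge> int u - int (dl u j)"
    unfolding tau_def using j by simp
  ultimately show ?thesis unfolding Rset_def using j e by force
qed

lemma Cmat_column:
  assumes "m \<in> X"
  shows "C k h m = (if h = (if m \<in> R k then Ag (ik k) else m) then 1 else 0)"
proof (cases "m \<in> R k")
  case False
  with assms have "m \<in> X - R k" by blast
  with False show ?thesis unfolding Cmat_def by (simp del: Diff_iff)
qed (simp add: Cmat_def)

lemma col_stochastic_Cmat: "col_stochastic X (C k)"
  unfolding col_stochastic_def
proof (intro conjI ballI)
  fix m assume m: "m \<in> X"
  then have "(if m \<in> R k then Ag (ik k) else m) \<in> X"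
    using Ag_in_aug_nodes active_agent by auto
  then show "(\<Sum>h\<in>X. C k h m) = 1"
    using finite_aug_nodes by (simp add: Cmat_column[OF m] sum.delta')
qed (simp add: Cmat_def)

lemma Smat_nonneg: "0 \<le> S k h m"
proof -
  have "0 \<le> a j (ik k)" if "j \<in> N_out E (ik k)" for j
    using that N_out_subset active_agent col_stochastic_nonneg[OF col_stochastic_a] by blast
  then show ?thesis
    using active_agent col_stochastic_nonneg[OF col_stochastic_a] by (cases h; cases m) simp_all
qed

lemma Smat_column_passive:
  "l \<noteq> ik k \<Longrightarrow> l \<in> agents I \<Longrightarrow> S k h (Ag l) = (if h = Ag l then 1 else 0)"
  by (cases h) simp_all

lemma Smat_column_Vt:
  assumes "(i, j) \<in> E" "d \<le> D"
  shows "S k h (Vt i j d) = (if h = Vt i j (min (Suc d) D) then 1 else 0)"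
proof (cases h)
  case (Vt i' j' d')
  have "(i' = i \<and> j' = j \<and> (i', j') \<in> E \<and> (d' = Suc d \<and> d < D \<or> d' = D \<and> d = D))
      \<longleftrightarrow> h = Vt i j (min (Suc d) D)"
    using assms Vt by (auto simp: min_def)
  then show ?thesis using Vt by (simp only: Smat_Vt_Vt)
qed simp

lemma Smat_column_active_sum: "(\<Sum>h\<in>X. S k h (Ag (ik k))) = 1"
proof -
  define i where "i = ik k"
  define V where "V = (\<lambda>j. Vt i j 0) ` N_out E i"
  have i: "i \<in> agents I" using active_agent i_def by simp
  have fin: "finite (N_out E i)"
    using N_out_subset finite_subset unfolding agents_def by blast
  have V: "insert (Ag i) V \<subseteq> X"
    using Ag_in_aug_nodes[OF i] Vt_in_aug_nodes unfolding V_def N_out_def by auto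
  have outside: "S k h (Ag i) = 0" if "h \<in> X - insert (Ag i) V" for h
    using that by (cases h) (auto simp: V_def i_def)
  have "(\<Sum>h\<in>X. S k h (Ag i)) = (\<Sum>h\<in>insert (Ag i) V. S k h (Ag i))"
    using finite_aug_nodes V outside by (intro sum.mono_neutral_right) auto
  also have "\<dots> = S k (Ag i) (Ag i) + (\<Sum>h\<in>V. S k h (Ag i))"
    by (rule sum.insert) (auto simp: V_def fin)
  also have "(\<Sum>h\<in>V. S k h (Ag i)) = (\<Sum>j\<in>N_out E i. a j i)"
    unfolding V_def by (subst sum.reindex) (auto simp: inj_on_def i_def)
  also have "(\<Sum>j\<in>N_out E i. a j i) = (\<Sum>j\<in>agents I - {i}. a j i)"
  proof (rule sum.mono_neutral_left)
    show "\<forall>j\<in>agents I - {i} - N_out E i. a j i = 0"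
      using compatible_a i unfolding compatible_def N_out_def by auto
  qed (use N_out_subset in \<open>auto simp: agents_def\<close>)
  also have "S k (Ag i) (Ag i) + (\<Sum>j\<in>agents I - {i}. a j i) = (\<Sum>j\<in>agents I. a j i)"
    using i by (simp add: i_def sum.remove agents_def)
  also have "\<dots> = 1" using col_stochastic_a i unfolding col_stochastic_def by blast
  finally show ?thesis unfolding i_def .
qed

lemma col_stochastic_Smat: "col_stochastic X (S k)"
  unfolding col_stochastic_def
proof (intro conjI ballI)
  fix m assume "m \<in> X"
  then show "(\<Sum>h\<in>X. S k h m) = 1"
  proof (cases rule: aug_nodes_cases)
    case (1 l)
    show ?thesis
    proof (cases "l = ik k")
      case True
      then show ?thesis using 1 Smat_column_active_sum by simp
    next
      case False
      then show ?thesis using 1 Ag_in_aug_nodes finite_aug_nodes by (simp add: Smat_column_passive)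
    qed
  next
    case (2 j i d)
    then have "Vt j i (min (Suc d) D) \<in> X" using Vt_in_aug_nodes by simp
    then show ?thesis using 2 finite_aug_nodes by (simp add: Smat_column_Vt sum.delta')
  qed
qed (rule Smat_nonneg)

lemma col_stochastic_Ahat: "col_stochastic X (A k)"
  unfolding Ahat_def by (rule col_stochastic_mmult[OF col_stochastic_Smat col_stochastic_Cmat])

lemma Ahat_column:
  assumes "m \<in> X"
  shows "A k h m = S k h (if m \<in> R k then Ag (ik k) else m)"
proof -
  define c where "c = (if m \<in> R k then Ag (ik k) else m)"
  have "c \<in> X" using assms Ag_in_aug_nodes active_agent unfolding c_def by auto
  have "A k h m = (\<Sum>l\<in>X. if l = c then S k h l else 0)"
    unfolding Ahat_def mmult_def Cmat_column[OF assms] c_def[symmetric] by (intro sum.cong) auto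
  also have "\<dots> = S k h c" using finite_aug_nodes \<open>c \<in> X\<close> by (simp add: sum.delta')
  finally show ?thesis unfolding c_def .
qed

lemma Aprod_eq_left_product: "Aprod I E a ik dl D t n = left_product X A t n"
  by (induction n) simp_all

lemma Ahat_wait_ge: "l \<in> agents I \<Longrightarrow> mbar \<le> A u (Ag l) (Ag l)"
  using compatible_a mbar_less_1 Ag_in_aug_nodes
  by (auto simp: Ahat_column Ag_notin_Rset compatible_def)

lemma Ahat_push_ge: "(ik u, j) \<in> E \<Longrightarrow> mbar \<le> A u (Vt (ik u) j 0) (Ag (ik u))"
  using compatible_a edge_agents Ag_in_aug_nodes active_agent
  by (simp add: Ahat_column Ag_notin_Rset compatible_def N_out_def)

lemma Ahat_absorb_ge:
  assumes "v \<in> R u"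
  shows "mbar \<le> A u (Ag (ik u)) v"
proof -
  have "v \<in> X" using assms Rset_subset by blast
  then show ?thesis
    using assms compatible_a active_agent by (simp add: Ahat_column compatible_def)
qed

lemma Ahat_shift_ge:
  assumes "(j, i) \<in> E" "d \<le> D" "Vt j i d \<notin> R u"
  shows "mbar \<le> A u (Vt j i (min (Suc d) D)) (Vt j i d)"
proof -
  have "A u (Vt j i (min (Suc d) D)) (Vt j i d) = S u (Vt j i (min (Suc d) D)) (Vt j i d)"
    using assms Ahat_column[OF Vt_in_aug_nodes[OF assms(1,2)]] by simp
  also have "\<dots> = 1" by (simp only: Smat_column_Vt[OF assms(1,2)]) simp
  finally show ?thesis using mbar_less_1 by simp
qed

lemma walk_wait:
  assumes "walk t y u (Ag l)" "l \<in> agents I" "u \<le> u'"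
  shows "walk t y u' (Ag l)"
  using heavy_walk_wait[OF assms(1) Ahat_wait_ge[OF assms(2)] assms(3)] .

lemma walk_absorb:
  assumes "walk t y u v" "v \<in> R u"
  shows "walk t y (Suc u) (Ag (ik u))"
  using heavy_walk.step[OF assms(1) Ag_in_aug_nodes[OF active_agent] Ahat_absorb_ge[OF assms(2)]] .

lemma walk_push:
  assumes "walk t y u (Ag (ik u))" "(ik u, j) \<in> E"
  shows "walk t y (Suc u) (Vt (ik u) j 0)"
  using heavy_walk.step[OF assms(1) Vt_in_aug_nodes[OF assms(2) le0] Ahat_push_ge[OF assms(2)]] .

lemma walk_shift:
  assumes "walk t y u (Vt j i d)" "(j, i) \<in> E" "d \<le> D" "Vt j i d \<notin> R u"
  shows "walk t y (Suc u) (Vt j i (min (Suc d) D))"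
  using heavy_walk.step[OF assms(1) Vt_in_aug_nodes[OF assms(2) min.cobounded2]
      Ahat_shift_ge[OF assms(2-4)]] .

lemma walk_virtual_to_receiver:
  assumes e: "(j, i) \<in> E" and s: "ik s = i"
  shows "walk t y u (Vt j i d) \<Longrightarrow> d \<le> D \<Longrightarrow> u + (D - d) \<le> s \<Longrightarrow> walk t y (Suc s) (Ag i)"
proof (induction "s - u" arbitrary: u d)
  case 0
  then have "u = s" "d = D" by auto
  then have "Vt j i d \<in> R u" using Vt_D_in_Rset[OF e] s by simp
  then show ?case using walk_absorb[OF "0.prems"(1)] \<open>u = s\<close> s by simp
next
  case (Suc g)
  show ?case
  proof (cases "Vt j i d \<in> R u")
    case True
    then have "walk t y (Suc u) (Ag i)"
      using walk_absorb[OF Suc.prems(1)] Vt_in_Rset_receiver by blast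
    then show ?thesis using walk_wait edge_agents[OF e] Suc.hyps(2) by simp
  next
    case False
    then have shifted: "walk t y (Suc u) (Vt j i (min (Suc d) D))"
      using walk_shift Suc.prems e by blast
    show ?thesis
      by (rule Suc.hyps(1)[OF _ shifted]) (use Suc.hyps(2) Suc.prems(2,3) in \<open>auto simp: min_def\<close>)
  qed
qed

lemma walk_edge: "walk t y u (Ag l) \<Longrightarrow> (l, j) \<in> E \<Longrightarrow> walk t y (u + (2 * T + D)) (Ag j)"
proof -
  assume walk: "walk t y u (Ag l)" and e: "(l, j) \<in> E"
  obtain s where s: "u \<le> s" "s < u + T" "ik s = l"
    using active_within edge_agents[OF e] by blast
  obtain s' where s': "Suc s + D \<le> s'" "s' < Suc s + D + T" "ik s' = j"
    using active_within edge_agents[OF e] by blast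
  have "walk t y s (Ag l)" using walk_wait[OF walk] edge_agents[OF e] s by blast
  then have "walk t y (Suc s) (Vt l j 0)" using walk_push e s by blast
  then have "walk t y (Suc s') (Ag j)" using walk_virtual_to_receiver e s' by simp
  then show ?thesis using walk_wait edge_agents[OF e] s s' by simp
qed

lemma walk_path:
  "rtrancl_path (\<lambda>u v. (u, v) \<in> E) l ps j \<Longrightarrow> walk t y u (Ag l) \<Longrightarrow>
     walk t y (u + length ps * (2 * T + D)) (Ag j)"
proof (induction arbitrary: u rule: rtrancl_path.induct)
  case (step x z ps j)
  have "walk t y (u + (2 * T + D) + length ps * (2 * T + D)) (Ag j)"
    using step.IH[OF walk_edge[OF step.prems step.hyps(1)]] .
  then show ?case by (simp add: algebra_simps)
qed simp

lemma walk_to_some_agent: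
  assumes "m \<in> X"
  obtains g where "g \<in> agents I" "walk k m (k + D + T) (Ag g)"
  using assms
proof (cases rule: aug_nodes_cases)
  case (1 l)
  have "walk k m k m" by (rule heavy_walk.start[OF assms])
  then have "walk k m (k + D + T) (Ag l)" using walk_wait 1 by simp
  then show ?thesis using that 1 by blast
next
  case (2 j i d)
  have i: "i \<in> agents I" using edge_agents[OF 2(2)] by blast
  obtain s where s: "k + D \<le> s" "s < k + D + T" "ik s = i"
    using active_within[OF i] by blast
  have "walk k m k (Vt j i d)" using heavy_walk.start[OF assms] 2 by simp
  then have "walk k m (Suc s) (Ag i)" using walk_virtual_to_receiver 2 s by simp
  then have "walk k m (k + D + T) (Ag i)" using walk_wait i s(2) by simp
  then show ?thesis using that i by blast
qed

lemma walk_to_every_agent: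
  assumes m: "m \<in> X" and h: "h \<in> agents I"
  shows "walk k m (k + D + T + (I - 1) * (2 * T + D)) (Ag h)"
proof -
  obtain g where g: "g \<in> agents I" "walk k m (k + D + T) (Ag g)"
    using walk_to_some_agent[OF m] .
  have "(g, h) \<in> E\<^sup>*" using graph g h unfolding strongly_connected_digraph_def by blast
  moreover have "Range E \<subseteq> agents I" using edge_agents by blast
  ultimately obtain ps where ps: "rtrancl_path (\<lambda>u v. (u, v) \<in> E) g ps h" "length ps < card (agents I)"
    using rtrancl_imp_short_rtrancl_path g(1) finite_agents by metis
  have "length ps * (2 * T + D) \<le> (I - 1) * (2 * T + D)"
    using ps(2) by (intro mult_le_mono1) (simp add: agents_def)
  then show ?thesis using walk_wait[OF walk_path[OF ps(1) g(2)] h] by simp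
qed

end

theorem lemma3:
  fixes I T D :: nat and E :: "(nat \<times> nat) set" and mbar :: real
    and a :: "nat \<Rightarrow> nat \<Rightarrow> real" and ik :: "nat \<Rightarrow> nat" and dl :: "nat \<Rightarrow> nat \<Rightarrow> nat"
  assumes "strongly_connected_digraph I E"
    and "0 < mbar" and "mbar < 1"
    and "col_stochastic (agents I) a"
    and "compatible I E mbar a"
    and "async_model I E ik dl T D"
  shows "\<forall>k::nat.
           col_stochastic (aug_nodes I E D) (Ahat I E a ik dl D k) \<and>
           (let K1 = (2 * I - 1) * T + I * D in
            \<forall>h\<in>agents I. \<forall>m\<in>aug_nodes I E D.
              Aprod I E a ik dl D k (K1 - 1) (Ag h) m \<ge> mbar ^ K1)"
proof -
  interpret augmented_network I T D E mbar a ik dl using assms by unfold_locales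
  define K1 where "K1 = (2 * I - 1) * T + I * D"
  have "0 < I" "0 < T" using active_agent[of 0] active_within[OF active_agent[of 0], of 0]
    by (auto simp: agents_def)
  then have K1: "K1 = D + T + (I - 1) * (2 * T + D)" "Suc (K1 - 1) = K1"
    unfolding K1_def by (cases I; simp add: algebra_simps)+
  have "mbar ^ K1 \<le> Aprod I E a ik dl D k (K1 - 1) (Ag h) m"
    if "h \<in> agents I" "m \<in> X" for k h m
  proof -
    have "walk k m (k + K1) (Ag h)"
      using walk_to_every_agent[OF that(2,1)] K1(1) by (simp add: add.assoc)
    then have "walk k m (Suc (k + (K1 - 1))) (Ag h)"
      using K1(2) by (metis add_Suc_right)
    from heavy_walk_le_left_product[OF finite_aug_nodes col_stochastic_Ahat _ this]
    show ?thesis using mbar_pos K1(2) by (simp add: Aprod_eq_left_product)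
  qed
  then show ?thesis using col_stochastic_Ahat unfolding K1_def Let_def by blast
qed

end
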